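(* Suppose $G$ is an abelian complex reflection group, and let $T$ and $V$ be length-$n$ reflection factorizations which generate $G$, factor the same element of $G$, and have the same multiset of conjugacy classes. Then $T$ and $V$ are Hurwitz equivalent.
   Context: A complex reflection group is a finite group of linear transformations of a complex vector space generated by reflections (linear maps whose fixed space has codimension $1$). A reflection factorization of $g\in G$ of length $n$ is a tuple $(r_1,\dots,r_n)$ of reflections in $G$ with $r_1\cdots r_n=g$; it generates $\langle r_1,\dots,r_n\rangle$. The Hurwitz move $\sigma_i$ ($1\le i<n$) sends $(r_1,\dots,r_n)$ to $(r_1,\dots,r_{i-1},r_{i+1},r_{i+1}^{-1}r_ir_{i+1},r_{i+2},\dots,r_n)$; two factorizations are Hurwitz equivalent if one is obtained from the other by a finite sequence of Hurwitz moves. The multiset of conjugacy classes of a factorization generating $G$ is the multiset of $G$-conjugacy classes of its entries. *)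

theory Defs
  imports "HOL-Analysis.Analysis" "HOL-Library.Multiset"
begin

definition is_reflection :: "complex^'n^'n \<Rightarrow> bool" where
  "is_reflection r \<longleftrightarrow> invertible r \<and>
     vec.dim {v :: complex^'n. r *v v = v} = CARD('n) - 1"

inductive_set gen_group :: "(complex^'n^'n) set \<Rightarrow> (complex^'n^'n) set"
  for S where
  gen_one: "mat 1 \<in> gen_group S"
| gen_base: "s \<in> S \<Longrightarrow> s \<in> gen_group S"
| gen_mult: "a \<in> gen_group S \<Longrightarrow> b \<in> gen_group S \<Longrightarrow> a ** b \<in> gen_group S"
| gen_inv: "a \<in> gen_group S \<Longrightarrow> matrix_inv a \<in> gen_group S"

definition matrix_group :: "(complex^'n^'n) set \<Rightarrow> bool" where
  "matrix_group G \<longleftrightarrow> mat 1 \<in> G \<and> (\<forall>a\<in>G. invertible a) \<and>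
     (\<forall>a\<in>G. \<forall>b\<in>G. a ** b \<in> G) \<and> (\<forall>a\<in>G. matrix_inv a \<in> G)"

definition complex_reflection_group :: "(complex^'n^'n) set \<Rightarrow> bool" where
  "complex_reflection_group G \<longleftrightarrow> matrix_group G \<and> finite G \<and>
     G = gen_group {r \<in> G. is_reflection r}"

definition abelian_group :: "(complex^'n^'n) set \<Rightarrow> bool" where
  "abelian_group G \<longleftrightarrow> (\<forall>a\<in>G. \<forall>b\<in>G. a ** b = b ** a)"

definition list_prod :: "(complex^'n^'n) list \<Rightarrow> complex^'n^'n" where
  "list_prod rs = foldr (**) rs (mat 1)"

definition reflection_factorization ::
  "(complex^'n^'n) set \<Rightarrow> complex^'n^'n \<Rightarrow> (complex^'n^'n) list \<Rightarrow> bool" where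
  "reflection_factorization G g rs \<longleftrightarrow>
     (\<forall>r\<in>set rs. r \<in> G \<and> is_reflection r) \<and> list_prod rs = g"

definition generates :: "(complex^'n^'n) list \<Rightarrow> (complex^'n^'n) set \<Rightarrow> bool" where
  "generates rs G \<longleftrightarrow> gen_group (set rs) = G"

text \<open>Hurwitz move sigma_(i+1) (0-based index i, i + 1 < length rs).\<close>
definition hurwitz_move :: "nat \<Rightarrow> (complex^'n^'n) list \<Rightarrow> (complex^'n^'n) list" where
  "hurwitz_move i rs = rs[i := rs ! (i+1),
       i+1 := matrix_inv (rs ! (i+1)) ** (rs ! i) ** (rs ! (i+1))]"

definition hurwitz_step :: "(complex^'n^'n) list \<Rightarrow> (complex^'n^'n) list \<Rightarrow> bool" where
  "hurwitz_step rs rs' \<longleftrightarrow> (\<exists>i. i + 1 < length rs \<and> rs' = hurwitz_move i rs)"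

definition hurwitz_equivalent :: "(complex^'n^'n) list \<Rightarrow> (complex^'n^'n) list \<Rightarrow> bool" where
  "hurwitz_equivalent T V \<longleftrightarrow> hurwitz_step\<^sup>*\<^sup>* T V"

definition conj_class :: "(complex^'n^'n) set \<Rightarrow> complex^'n^'n \<Rightarrow> (complex^'n^'n) set" where
  "conj_class G x = {g ** x ** matrix_inv g | g. g \<in> G}"

definition class_multiset ::
  "(complex^'n^'n) set \<Rightarrow> (complex^'n^'n) list \<Rightarrow> (complex^'n^'n) set multiset" where
  "class_multiset G rs = mset (map (conj_class G) rs)"

end

theory Submission
  imports Defs
begin

text \<open>In an abelian group every conjugacy class is a singleton, so equal multisets of classes
  mean that \<open>V\<close> is a permutation of \<open>T\<close>. For commuting entries a Hurwitz move just swaps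
  two neighbours, and adjacent transpositions generate all permutations.\<close>

lemma matrix_inv_mul:
  fixes A :: "'a::semiring_1^'n^'n"
  assumes "invertible A"
  shows matrix_inv_right: "A ** matrix_inv A = mat 1"
    and matrix_inv_left: "matrix_inv A ** A = mat 1"
proof -
  have "\<exists>A'. A ** A' = mat 1 \<and> A' ** A = mat 1"
    using assms unfolding invertible_def by blast
  then have "A ** matrix_inv A = mat 1 \<and> matrix_inv A ** A = mat 1"
    unfolding matrix_inv_def by (rule someI_ex)
  then show "A ** matrix_inv A = mat 1" "matrix_inv A ** A = mat 1" by auto
qed

definition adjacent_swap :: "'a list \<Rightarrow> 'a list \<Rightarrow> bool" where
  "adjacent_swap xs ys \<longleftrightarrow> (\<exists>i. i + 1 < length xs \<and> ys = xs[i := xs ! (i+1), i+1 := xs ! i])"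

lemma adjacent_swap_Cons:
  assumes "adjacent_swap xs ys"
  shows "adjacent_swap (x # xs) (x # ys)"
proof -
  from assms obtain i where "i + 1 < length xs" "ys = xs[i := xs ! (i+1), i+1 := xs ! i]"
    unfolding adjacent_swap_def by blast
  then show ?thesis unfolding adjacent_swap_def by (intro exI[of _ "Suc i"]) simp
qed

lemma rtranclp_adjacent_swap_Cons:
  "adjacent_swap\<^sup>*\<^sup>* xs ys \<Longrightarrow> adjacent_swap\<^sup>*\<^sup>* (x # xs) (x # ys)"
  by (induction rule: rtranclp_induct) (auto intro: rtranclp.rtrancl_into_rtrancl adjacent_swap_Cons)

lemma rtranclp_adjacent_swap_move: "adjacent_swap\<^sup>*\<^sup>* (a # us @ vs) (us @ a # vs)"
proof (induction us)
  case Nil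
  show ?case by simp
next
  case (Cons u us)
  have "adjacent_swap (a # u # us @ vs) (u # a # us @ vs)"
    unfolding adjacent_swap_def by (intro exI[of _ 0]) auto
  moreover have "adjacent_swap\<^sup>*\<^sup>* (u # a # us @ vs) (u # us @ a # vs)"
    using Cons.IH by (rule rtranclp_adjacent_swap_Cons)
  ultimately show ?case by (simp add: converse_rtranclp_into_rtranclp)
qed

lemma rtranclp_adjacent_swap_if_mset_eq: "mset xs = mset ys \<Longrightarrow> adjacent_swap\<^sup>*\<^sup>* xs ys"
proof (induction xs arbitrary: ys)
  case Nil
  then show ?case by simp
next
  case (Cons a xs)
  then have "a \<in> set ys" by (metis list.set_intros(1) set_mset_mset)
  then obtain us vs where ys: "ys = us @ a # vs" by (metis split_list)
  with Cons.prems have "adjacent_swap\<^sup>*\<^sup>* xs (us @ vs)" by (intro Cons.IH) simp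
  then have "adjacent_swap\<^sup>*\<^sup>* (a # xs) (a # us @ vs)" by (rule rtranclp_adjacent_swap_Cons)
  then show ?case unfolding ys using rtranclp_adjacent_swap_move by (rule rtranclp_trans)
qed

lemma set_adjacent_swap: "adjacent_swap xs ys \<Longrightarrow> set ys = set xs"
  unfolding adjacent_swap_def by (metis mset_swap add_lessD1 lessI set_mset_mset)

lemma hurwitz_move_commuting:
  assumes "invertible (rs ! (i+1))" and "rs ! i ** rs ! (i+1) = rs ! (i+1) ** rs ! i"
  shows "hurwitz_move i rs = rs[i := rs ! (i+1), i+1 := rs ! i]"
proof -
  have "matrix_inv (rs ! (i+1)) ** rs ! i ** rs ! (i+1)
      = (matrix_inv (rs ! (i+1)) ** rs ! (i+1)) ** rs ! i"
    by (metis assms(2) matrix_mul_assoc)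
  also have "\<dots> = rs ! i" using matrix_inv_left[OF assms(1)] by simp
  finally show ?thesis unfolding hurwitz_move_def by simp
qed

lemma hurwitz_equivalent_if_commuting_perm:
  assumes commute: "\<And>a b. a \<in> set T \<Longrightarrow> b \<in> set T \<Longrightarrow> a ** b = b ** a"
    and invertible: "\<And>a. a \<in> set T \<Longrightarrow> invertible a"
    and "mset T = mset V"
  shows "hurwitz_equivalent T V"
proof -
  have "hurwitz_step\<^sup>*\<^sup>* T W \<and> set W = set T" if "adjacent_swap\<^sup>*\<^sup>* T W" for W
    using that
  proof (induction rule: rtranclp_induct)
    case base
    show ?case by simp
  next
    case (step W W')
    then obtain i where i: "i + 1 < length W" and W': "W' = W[i := W ! (i+1), i+1 := W ! i]"
      unfolding adjacent_swap_def by blast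
    have "W ! i \<in> set T" "W ! (i+1) \<in> set T" using step.IH i by auto
    then have "hurwitz_move i W = W'"
      unfolding W' by (intro hurwitz_move_commuting invertible commute)
    with i have "hurwitz_step W W'" unfolding hurwitz_step_def by blast
    with step show ?case
      by (auto simp: set_adjacent_swap intro: rtranclp.rtrancl_into_rtrancl)
  qed
  with \<open>mset T = mset V\<close> show ?thesis
    unfolding hurwitz_equivalent_def by (blast dest: rtranclp_adjacent_swap_if_mset_eq)
qed

lemma conj_class_abelian:
  assumes "matrix_group G" and "abelian_group G" and "x \<in> G"
  shows "conj_class G x = {x}"
proof -
  have conj: "h ** x ** matrix_inv h = x" if "h \<in> G" for h
  proof -
    have "h ** x ** matrix_inv h = x ** (h ** matrix_inv h)"
      using assms(2,3) that unfolding abelian_group_def by (simp add: matrix_mul_assoc)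
    also have "\<dots> = x"
      using assms(1) that unfolding matrix_group_def by (simp add: matrix_inv_right)
    finally show ?thesis .
  qed
  have "mat 1 \<in> G" using assms(1) unfolding matrix_group_def by blast
  with conj have "x \<in> conj_class G x" unfolding conj_class_def by force
  with conj show ?thesis unfolding conj_class_def by blast
qed

lemma mset_eq_if_class_multiset_eq:
  assumes "matrix_group G" and "abelian_group G" and "set T \<subseteq> G" and "set V \<subseteq> G"
    and "class_multiset G T = class_multiset G V"
  shows "mset T = mset V"
proof -
  have "class_multiset G rs = image_mset (\<lambda>x. {x}) (mset rs)" if "set rs \<subseteq> G" for rs
    unfolding class_multiset_def mset_map
    by (intro image_mset_cong) (use that conj_class_abelian[OF assms(1,2)] in auto)
  with assms have "image_mset (\<lambda>x. {x}) (mset T) = image_mset (\<lambda>x. {x}) (mset V)" by simp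
  then have "image_mset the_elem (image_mset (\<lambda>x. {x}) (mset T))
      = image_mset the_elem (image_mset (\<lambda>x. {x}) (mset V))" by simp
  then show ?thesis by (simp add: multiset.map_comp comp_def)
qed

theorem proposition3p1:
  fixes G :: "(complex^'n^'n) set" and g :: "complex^'n^'n"
    and T V :: "(complex^'n^'n) list" and n :: nat
  assumes "complex_reflection_group G"
    and "abelian_group G"
    and "length T = n" and "length V = n"
    and "g \<in> G"
    and "reflection_factorization G g T" and "reflection_factorization G g V"
    and "generates T G" and "generates V G"
    and "class_multiset G T = class_multiset G V"
  shows "hurwitz_equivalent T V"
proof -
  have G: "matrix_group G" using assms(1) unfolding complex_reflection_group_def by blast
  have TG: "set T \<subseteq> G" and VG: "set V \<subseteq> G"
    using assms(6,7) unfolding reflection_factorization_def by auto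
  have "mset T = mset V"
    using mset_eq_if_class_multiset_eq[OF G assms(2) TG VG assms(10)] .
  moreover have "a ** b = b ** a" if "a \<in> set T" "b \<in> set T" for a b
    using assms(2) TG that unfolding abelian_group_def by blast
  moreover have "invertible a" if "a \<in> set T" for a
    using G TG that unfolding matrix_group_def by blast
  ultimately show ?thesis by (intro hurwitz_equivalent_if_commuting_perm)
qed

end
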